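(* Let $f_0$ be an arithmetic function and let $m\ge1$. For every $n\ge1$, \[f_m(n)=\sum_{i=1}^n m^{i-1}c_1(n,i).\]
   Context: An arithmetic function is a function $f_0:\{1,2,\ldots\}\to\mathbb{C}$. For $m\ge 1$, $f_m$ is the invert transform of $f_{m-1}$, i.e. $f_m(n)=f_{m-1}(n)+\sum_{i=1}^{n-1}f_{m-1}(i)f_m(n-i)$ for $n\ge1$. The numbers $c_1(n,k)$, $0\le k\le n$, are defined by $c_1(0,0)=1$, $c_1(n,0)=0$ for $n\ge1$, and $c_1(n,k)=\sum_{i=1}^{n-k+1}f_{0}(i)\,c_1(n-i,k-1)$ for $1\le k\le n$. *)

theory Defs
  imports Complex_Main
begin

text \<open>Arithmetic functions are modelled as functions nat => complex; the value at 0 is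
irrelevant (never used for n >= 1).\<close>

fun invert :: "(nat \<Rightarrow> complex) \<Rightarrow> nat \<Rightarrow> complex" where
  "invert g n = g n + (\<Sum>i\<in>{1..<n}. g i * (if n - i < n then invert g (n - i) else 0))"

declare invert.simps[simp del]

definition fm :: "(nat \<Rightarrow> complex) \<Rightarrow> nat \<Rightarrow> nat \<Rightarrow> complex" where
  "fm f0 m = (invert ^^ m) f0"

fun c1 :: "(nat \<Rightarrow> complex) \<Rightarrow> nat \<Rightarrow> nat \<Rightarrow> complex" where
  "c1 f0 n 0 = (if n = 0 then 1 else 0)"
| "c1 f0 n (Suc k) = (if Suc k \<le> n then (\<Sum>i\<in>{1..n - Suc k + 1}. f0 i * c1 f0 (n - i) k) else 0)"

end

(* Let F = \<Sum>n\<ge>1 f\<^sub>0(n) x^n. Then c\<^sub>1(n,k) is the coefficient of x^n in F^k, and the invert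
   transform acts on generating functions as G \<mapsto> G/(1 - G). This map sends F/(1 - cF) to
   F/(1 - (c+1)F), so f\<^sub>m has generating function F/(1 - mF) = \<Sum>k\<ge>1 m^(k-1) F^k, and since F^k
   has no terms below x^k only k \<le> n contribute to the coefficient of x^n. *)

theory Submission
  imports Defs "HOL-Computational_Algebra.Formal_Power_Series"
begin

unbundle fps_syntax

lemma fps_power_mult_nth_eq_0:
  fixes F H :: "'a::idom fps"
  assumes "F $ 0 = 0" and "n < k"
  shows "(F ^ k * H) $ n = 0"
proof (cases "F = 0")
  case True
  with assms show ?thesis by (simp add: zero_power)
next
  case False
  with assms have "subdegree F \<noteq> 0" by (simp add: subdegree_eq_0_iff)
  with False have "k \<le> subdegree (F ^ k)" by simp
  with assms show ?thesis by (intro fps_mult_nth_eq0) linarith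
qed

definition arith_fps :: "(nat \<Rightarrow> 'a::zero) \<Rightarrow> 'a fps" where
  "arith_fps f = Abs_fps (\<lambda>n. if n = 0 then 0 else f n)"

lemma arith_fps_nth [simp]: "arith_fps f $ n = (if n = 0 then 0 else f n)"
  by (simp add: arith_fps_def)

lemma c1_eq_power_nth: "c1 f n k = (arith_fps f ^ k) $ n"
proof (induction k arbitrary: n)
  case 0
  then show ?case by simp
next
  case (Suc k)
  define F where "F = arith_fps f"
  show ?case
  proof (cases "Suc k \<le> n")
    case True
    then have bound: "n - Suc k + 1 = n - k" by simp
    have "c1 f n (Suc k) = (\<Sum>i=1..n - k. f i * c1 f (n - i) k)"
      by (simp only: c1.simps True if_True bound)
    also have "\<dots> = (\<Sum>i=1..n - k. F $ i * (F ^ k) $ (n - i))"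
      by (simp add: Suc.IH F_def)
    also have "\<dots> = (\<Sum>i=0..n. F $ i * (F ^ k) $ (n - i))"
      using fps_power_mult_nth_eq_0[of F "n - _" k 1]
      by (intro sum.mono_neutral_left) (auto simp: F_def)
    also have "\<dots> = (F ^ Suc k) $ n"
      by (simp add: fps_mult_nth)
    finally show ?thesis by (simp only: F_def)
  next
    case False
    then show ?thesis using fps_power_mult_nth_eq_0[of F n "Suc k" 1] by (simp add: F_def)
  qed
qed

lemma fps_nth_mult_inverse_geometric:
  fixes F :: "'a::field fps"
  assumes "F $ 0 = 0"
  shows "(F * inverse (1 - fps_const c * F)) $ n = (\<Sum>k=1..n. c ^ (k - 1) * (F ^ k) $ n)"
proof -
  define x where "x = fps_const c * F"
  define G where "G = F * inverse (1 - x)"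
  have "inverse (1 - x) * (1 - x) = 1"
    using assms by (intro inverse_mult_eq_1) (simp add: x_def)
  then have G_times: "G * (1 - x) = F"
    by (simp add: G_def mult.assoc)
  have "G = G * ((1 - x) * (\<Sum>i<n. x ^ i) + x ^ n)"
    by (simp flip: one_diff_power_eq)
  also have "\<dots> = (\<Sum>i<n. fps_const (c ^ i) * F ^ Suc i)
      + F ^ Suc n * (fps_const (c ^ n) * inverse (1 - x))"
    by (simp add: distrib_left G_times sum_distrib_left flip: mult.assoc)
      (simp add: G_def x_def power_mult_distrib mult_ac)
  finally have "G $ n = (\<Sum>i<n. c ^ i * (F ^ Suc i) $ n)"
    using fps_power_mult_nth_eq_0[OF assms, of n "Suc n"]
    by (simp only: fps_add_nth fps_sum_nth fps_mult_left_const_nth) simp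
  also have "\<dots> = (\<Sum>k=1..n. c ^ (k - 1) * (F ^ k) $ n)"
    by (rule sum.reindex_bij_witness[of _ "\<lambda>k. k - 1" Suc]) auto
  finally show ?thesis by (simp add: G_def x_def)
qed

definition invert_fps :: "'a::field fps \<Rightarrow> 'a fps" where
  "invert_fps G = G * inverse (1 - G)"

lemma invert_fps_nth_0 [simp]: "G $ 0 = 0 \<Longrightarrow> invert_fps G $ 0 = 0"
  by (simp add: invert_fps_def)

lemma invert_fps_eq: "G $ 0 = 0 \<Longrightarrow> invert_fps G = G + G * invert_fps G"
proof -
  assume "G $ 0 = 0"
  then have "invert_fps G * (1 - G) = G"
    by (simp add: invert_fps_def mult.assoc inverse_mult_eq_1)
  then show ?thesis
    by (simp add: algebra_simps eq_diff_eq)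
qed

lemma invert_eq_invert_fps_nth:
  assumes G0: "G $ 0 = 0" and g: "\<And>i. 1 \<le> i \<Longrightarrow> g i = G $ i" and "1 \<le> n"
  shows "invert g n = invert_fps G $ n"
  using \<open>1 \<le> n\<close>
proof (induction n rule: less_induct)
  case (less n)
  have "invert g n = g n + (\<Sum>i\<in>{1..<n}. g i * invert g (n - i))"
    by (subst invert.simps) auto
  also have "\<dots> = G $ n + (\<Sum>i\<in>{1..<n}. G $ i * invert_fps G $ (n - i))"
    using less g by (intro arg_cong2[where f="(+)"] sum.cong) auto
  also have "(\<Sum>i\<in>{1..<n}. G $ i * invert_fps G $ (n - i)) = (G * invert_fps G) $ n"
    unfolding fps_mult_nth using G0 by (intro sum.mono_neutral_left) (auto simp: not_less_eq_eq)
  finally show ?case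
    by (subst invert_fps_eq[OF G0]) simp
qed

lemma invert_fps_mult_inverse:
  fixes F c :: "'a::field fps"
  assumes "F $ 0 = 0"
  shows "invert_fps (F * inverse (1 - c * F)) = F * inverse (1 - (c + 1) * F)"
proof -
  define A where "A = 1 - c * F"
  define B where "B = 1 - (c + 1) * F"
  have A0: "A $ 0 \<noteq> 0"
    using assms by (simp add: A_def)
  have "1 - F * inverse A = (A - F) * inverse A"
    using A0 by (simp add: algebra_simps inverse_mult_eq_1')
  also have "A - F = B"
    by (simp add: A_def B_def algebra_simps)
  finally have "inverse (1 - F * inverse A) = inverse B * A"
    using A0 by (simp add: fps_inverse_mult)
  then have "invert_fps (F * inverse A) = F * inverse B * (inverse A * A)"
    by (simp add: invert_fps_def mult_ac)
  then show ?thesis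
    using A0 by (simp add: inverse_mult_eq_1 A_def B_def)
qed

lemma fm_eq_nth:
  assumes "1 \<le> n"
  shows "fm f m n = (arith_fps f * inverse (1 - of_nat m * arith_fps f)) $ n"
  using assms
proof (induction m arbitrary: n)
  case 0
  then show ?case by (simp add: fm_def)
next
  case (Suc m)
  have "fm f (Suc m) n = invert (fm f m) n"
    by (simp add: fm_def)
  also have "\<dots> = invert_fps (arith_fps f * inverse (1 - of_nat m * arith_fps f)) $ n"
    using Suc by (intro invert_eq_invert_fps_nth) auto
  finally show ?case
    by (simp add: invert_fps_mult_inverse add.commute)
qed

theorem proposition10:
  fixes f0 :: "nat \<Rightarrow> complex" and m n :: nat
  assumes "m \<ge> 1" and "n \<ge> 1"
  shows "fm f0 m n = (\<Sum>i=1..n. of_nat m ^ (i - 1) * c1 f0 n i)"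
proof -
  have "fm f0 m n = (arith_fps f0 * inverse (1 - fps_const (of_nat m) * arith_fps f0)) $ n"
    using assms(2) by (simp add: fm_eq_nth fps_of_nat)
  then show ?thesis
    by (simp add: fps_nth_mult_inverse_geometric c1_eq_power_nth)
qed

end
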